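(* Let $M_0$ be a primitive hyperbolic $2$-elementary sublattice of $L_{K3}$ and $\widetilde M_0=M_0\oplus\mathbb{Z}e\subset L_2$. Then $\Delta(M_0^{\perp_{L_{K3}}})=\Delta(\widetilde M_0^{\perp_{L_2}})$.
   Context: $L_{K3}=U^{\oplus3}\oplus E_8^{\oplus2}$ (even unimodular, $E_8$ negative definite), $L_2=L_{K3}\oplus\mathbb{Z}e$ with $e^2=-2$, $(e,L_{K3})=0$; note $\widetilde M_0^{\perp_{L_2}}=M_0^{\perp_{L_{K3}}}$. $\Delta(M_0^{\perp_{L_{K3}}})=\{d\in M_0^{\perp}: d^2=-2\}$ and $\Delta(\widetilde M_0^{\perp_{L_2}})=\{\delta\in\widetilde M_0^{\perp}:\ \delta^2=-2,\ \text{or}\ \delta^2=-10\text{ and }(\delta,L_2)=2\mathbb{Z}\}$. *)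

theory Defs
  imports Main
begin

text \<open>Coordinates 0..21 carry
  L_K3 = U^3 + E8(-1)^2 (indices 0..5: three copies of U; 6..13 and 14..21: two copies of
  the negative definite E8), coordinate 22 carries the extra generator e with e^2 = -2.
  L_K3 is the set of vectors supported on {0..<22}, L_2 those supported on {0..<23};
  thus L_K3 is literally a sublattice of L_2 and e is orthogonal to it.\<close>

definition e8_adj :: "nat \<Rightarrow> nat \<Rightarrow> bool" where
  "e8_adj a b \<longleftrightarrow> (a, b) \<in> {(0,2),(2,3),(3,4),(4,5),(5,6),(6,7),(1,3)}"

text \<open>Gram matrix of the negative definite E8 lattice (minus the Cartan matrix).\<close>
definition e8_gram :: "nat \<Rightarrow> nat \<Rightarrow> int" where
  "e8_gram a b = (if a = b then -2 else if e8_adj a b \<or> e8_adj b a then 1 else 0)"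

definition gram :: "nat \<Rightarrow> nat \<Rightarrow> int" where
  "gram i j =
    (if i < 6 \<and> j < 6 then (if i div 2 = j div 2 \<and> i \<noteq> j then 1 else 0)
     else if 6 \<le> i \<and> i < 14 \<and> 6 \<le> j \<and> j < 14 then e8_gram (i - 6) (j - 6)
     else if 14 \<le> i \<and> i < 22 \<and> 14 \<le> j \<and> j < 22 then e8_gram (i - 14) (j - 14)
     else if i = 22 \<and> j = 22 then -2
     else 0)"

definition bil :: "(nat \<Rightarrow> int) \<Rightarrow> (nat \<Rightarrow> int) \<Rightarrow> int" where
  "bil x y = (\<Sum>i<23. \<Sum>j<23. x i * gram i j * y j)"

definition LK3 :: "(nat \<Rightarrow> int) set" where
  "LK3 = {x. \<forall>i\<ge>22. x i = 0}"

definition L2 :: "(nat \<Rightarrow> int) set" where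
  "L2 = {x. \<forall>i\<ge>23. x i = 0}"

definition evec :: "nat \<Rightarrow> int" where
  "evec = (\<lambda>i. if i = 22 then 1 else 0)"

definition sublattice :: "(nat \<Rightarrow> int) set \<Rightarrow> (nat \<Rightarrow> int) set \<Rightarrow> bool" where
  "sublattice M L \<longleftrightarrow> M \<subseteq> L \<and> (\<lambda>i. 0) \<in> M \<and>
     (\<forall>x\<in>M. \<forall>y\<in>M. (\<lambda>i. x i + y i) \<in> M) \<and> (\<forall>x\<in>M. (\<lambda>i. - x i) \<in> M)"

definition primitive_in :: "(nat \<Rightarrow> int) set \<Rightarrow> (nat \<Rightarrow> int) set \<Rightarrow> bool" where
  "primitive_in M L \<longleftrightarrow> (\<forall>x\<in>L. \<forall>n::int. n \<noteq> 0 \<longrightarrow> (\<lambda>i. n * x i) \<in> M \<longrightarrow> x \<in> M)"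

text \<open>Hyperbolic: signature (1, rank - 1), i.e. there is a vector of positive square whose
  orthogonal complement in M is negative definite (this also forces nondegeneracy).\<close>
definition hyperbolic :: "(nat \<Rightarrow> int) set \<Rightarrow> bool" where
  "hyperbolic M \<longleftrightarrow> (\<exists>v\<in>M. bil v v > 0 \<and>
     (\<forall>w\<in>M. bil v w = 0 \<and> w \<noteq> (\<lambda>i. 0) \<longrightarrow> bil w w < 0))"

text \<open>2-elementary: the discriminant group M^*/M, with M^* = Hom(M, Z) and M embedded via
  m |-> (m, -), is killed by 2: every twice a homomorphism M -> Z is of the form (m, -).\<close>
definition two_elementary :: "(nat \<Rightarrow> int) set \<Rightarrow> bool" where
  "two_elementary M \<longleftrightarrow> (\<forall>f :: (nat \<Rightarrow> int) \<Rightarrow> int.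
     (\<forall>x\<in>M. \<forall>y\<in>M. f (\<lambda>i. x i + y i) = f x + f y) \<longrightarrow>
     (\<exists>m\<in>M. \<forall>x\<in>M. 2 * f x = bil m x))"

definition orth_in :: "(nat \<Rightarrow> int) set \<Rightarrow> (nat \<Rightarrow> int) set \<Rightarrow> (nat \<Rightarrow> int) set" where
  "orth_in S L = {x\<in>L. \<forall>y\<in>S. bil x y = 0}"

definition Mtilde :: "(nat \<Rightarrow> int) set \<Rightarrow> (nat \<Rightarrow> int) set" where
  "Mtilde M = {(\<lambda>i. m i + k * evec i) | m k. m \<in> M}"

definition Delta_K3 :: "(nat \<Rightarrow> int) set \<Rightarrow> (nat \<Rightarrow> int) set" where
  "Delta_K3 S = {d\<in>S. bil d d = -2}"

definition Delta_L2 :: "(nat \<Rightarrow> int) set \<Rightarrow> (nat \<Rightarrow> int) set" where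
  "Delta_L2 S = {d\<in>S. bil d d = -2 \<or>
      (bil d d = -10 \<and> (\<lambda>x. bil d x) ` L2 = {2 * k | k. True})}"

end

theory Submission
  imports Defs
begin

(* Pairing with e is -2 times the e-coordinate, so the complement of M0 + Ze in L2 is the
   complement of M0 in L_K3.  A vector d there with (d, L2) = 2Z pairs evenly with all of
   L_K3; as L_K3 is unimodular, its Gram matrix is invertible mod 2, so d lies in 2 L_K3 and
   4 divides d^2.  Hence there are no vectors of square -10 of the second kind, and both root
   systems consist of the (-2)-vectors. *)

definition basis_vec :: "nat \<Rightarrow> nat \<Rightarrow> int" where
  "basis_vec j = (\<lambda>i. if i = j then 1 else 0)"

lemma basis_vec_in_LK3: "j < 22 \<Longrightarrow> basis_vec j \<in> LK3"
  by (simp add: basis_vec_def LK3_def)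

lemma bil_basis_vec_right: "j < 23 \<Longrightarrow> bil x (basis_vec j) = (\<Sum>i<23. x i * gram i j)"
  unfolding bil_def basis_vec_def
  by (simp add: if_distrib[of "\<lambda>t. _ * t"] sum.If_cases cong: sum.cong)

lemma bil_add_right: "bil x (\<lambda>i. y i + z i) = bil x y + bil x z"
  unfolding bil_def by (simp add: algebra_simps sum.distrib)

lemma bil_mult_right: "bil x (\<lambda>i. k * y i) = k * bil x y"
  unfolding bil_def by (simp add: sum_distrib_left algebra_simps)

lemma sum_gram_column_block:
  assumes "k + n \<le> 23"
    and "\<And>i. i < 23 \<Longrightarrow> i \<notin> {k..<k + n} \<Longrightarrow> gram i j = 0"
  shows "(\<Sum>i<23. x i * gram i j) = (\<Sum>a<n. x (a + k) * gram (a + k) j)"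
proof -
  have "(\<Sum>i<23. x i * gram i j) = (\<Sum>i\<in>{k..<k + n}. x i * gram i j)"
    using assms by (intro sum.mono_neutral_right) auto
  also have "\<dots> = (\<Sum>a<n. x (a + k) * gram (a + k) j)"
    using sum.shift_bounds_nat_ivl[of "\<lambda>i. x i * gram i j" 0 k n]
    by (simp add: add.commute atLeast0LessThan)
  finally show ?thesis .
qed

lemma gram_eq_0_across_blocks:
  assumes "\<not> ((i < 6 \<longleftrightarrow> j < 6) \<and> (i < 14 \<longleftrightarrow> j < 14) \<and> (i < 22 \<longleftrightarrow> j < 22))"
  shows "gram i j = 0"
  using assms by (auto simp: gram_def)

lemma gram_E8_block:
  assumes "k = 6 \<or> k = 14" and "a < 8" and "b < 8"
  shows "gram (a + k) (b + k) = e8_gram a b"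
  using assms by (elim disjE) (simp_all add: gram_def)

lemma bil_evec_right: "bil x evec = -2 * x 22"
proof -
  have "evec = basis_vec 22" by (simp add: evec_def basis_vec_def)
  then have "bil x evec = (\<Sum>i<23. x i * gram i 22)" using bil_basis_vec_right[of 22 x] by simp
  also have "\<dots> = (\<Sum>a<1. x (a + 22) * gram (a + 22) 22)"
    by (rule sum_gram_column_block) (auto intro: gram_eq_0_across_blocks)
  finally show ?thesis by (simp add: gram_def)
qed

lemma U3_pairing_even_imp_even:
  fixes x :: "nat \<Rightarrow> int"
  assumes even_col: "\<And>b. b < 6 \<Longrightarrow> even (\<Sum>a<6. x a * gram a b)"
  shows "a < 6 \<Longrightarrow> even (x a)"
proof -
  have col: "even (\<Sum>a<6. x a * gram a b)" if "b \<in> {0,1,2,3,4,5}" for b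
    using that even_col by auto
  have "even (x a)" if "a \<in> {0,1,2,3,4,5}" for a
    using that col[of 0] col[of 1] col[of 2] col[of 3] col[of 4] col[of 5]
    by (auto simp: lessThan_nat_numeral gram_def)
  then show "a < 6 \<Longrightarrow> even (x a)"
    by (auto simp: less_Suc_eq numeral_eq_Suc)
qed

lemma E8_pairing_even_imp_even:
  fixes x :: "nat \<Rightarrow> int"
  assumes even_col: "\<And>b. b < 8 \<Longrightarrow> even (\<Sum>a<8. x a * e8_gram a b)"
  shows "a < 8 \<Longrightarrow> even (x a)"
proof -
  have col: "even (\<Sum>a<8. x a * e8_gram a b)" if "b \<in> {0,1,2,3,4,5,6,7}" for b
    using that even_col by auto
  note col_simps = lessThan_nat_numeral e8_gram_def e8_adj_def
  \<comment> \<open>Mod 2 the column of a vertex is the sum of its neighbours in the Dynkin diagram;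
    the steps peel the diagram off from its leaves.\<close>
  have "even (x 6)" using col[of 7] by (simp add: col_simps)
  moreover have "even (x 2)" using col[of 0] by (simp add: col_simps)
  moreover have "even (x 3)" using col[of 1] by (simp add: col_simps)
  moreover have "even (x 0)" using col[of 2] \<open>even (x 3)\<close> by (simp add: col_simps)
  moreover have "even (x 5)" using col[of 4] \<open>even (x 3)\<close> by (simp add: col_simps)
  moreover have "even (x 7)" using col[of 6] \<open>even (x 5)\<close> by (simp add: col_simps)
  moreover have "even (x 4)" using col[of 5] \<open>even (x 6)\<close> by (simp add: col_simps)
  moreover have "even (x 1)" using col[of 3] \<open>even (x 2)\<close> \<open>even (x 4)\<close> by (simp add: col_simps)
  ultimately show "a < 8 \<Longrightarrow> even (x a)"
    by (auto simp: less_Suc_eq numeral_eq_Suc)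
qed

lemma LK3_pairing_even_imp_even:
  assumes x: "x \<in> LK3" and even_pairing: "\<And>y. y \<in> LK3 \<Longrightarrow> even (bil x y)"
  shows "even (x i)"
proof -
  have col: "even (\<Sum>a<23. x a * gram a j)" if "j < 22" for j
    using even_pairing[OF basis_vec_in_LK3[OF that]] that by (simp add: bil_basis_vec_right)
  have block_col: "(\<Sum>a<23. x a * gram a j) = (\<Sum>a<n. x (a + k) * gram (a + k) j)"
    if "(k, n) \<in> {(0, 6), (6, 8), (14, 8)}" "k \<le> j" "j < k + n" for k n j
    using that by (intro sum_gram_column_block) (auto intro: gram_eq_0_across_blocks)
  have U3_block: "even (x i)" if "i < 6"
  proof (rule U3_pairing_even_imp_even[OF _ that])
    fix b :: nat assume "b < 6"
    then show "even (\<Sum>a<6. x a * gram a b)" using col[of b] block_col[of 0 6 b] by simp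
  qed
  have E8_block: "even (x i)" if k: "k = 6 \<or> k = 14" and "k \<le> i" "i < k + 8" for k
  proof -
    have "even (x (a + k))" if "a < 8" for a
    proof (rule E8_pairing_even_imp_even[OF _ that])
      fix b :: nat assume b: "b < 8"
      have "(\<Sum>a<23. x a * gram a (b + k)) = (\<Sum>a<8. x (a + k) * gram (a + k) (b + k))"
        using k b by (intro block_col) auto
      also have "\<dots> = (\<Sum>a<8. x (a + k) * e8_gram a b)"
        using gram_E8_block[OF k _ b] by simp
      finally show "even (\<Sum>a<8. x (a + k) * e8_gram a b)"
        using col[of "b + k"] k b by auto
    qed
    from this[of "i - k"] show ?thesis using \<open>k \<le> i\<close> \<open>i < k + 8\<close> by simp
  qed
  show ?thesis
  proof (cases "i < 22")
    case True
    then consider "i < 6" | "6 \<le> i" "i < 6 + 8" | "14 \<le> i" "i < 14 + 8" by linarith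
    then show ?thesis using U3_block E8_block by cases auto
  next
    case False
    then show ?thesis using x by (simp add: LK3_def)
  qed
qed

lemma four_dvd_bil_if_even:
  assumes "\<And>i. even (x i)" and "\<And>j. even (y j)"
  shows "4 dvd bil x y"
  unfolding bil_def
proof (intro dvd_sum)
  fix i j
  have "2 * 2 dvd x i * y j" using assms by (intro mult_dvd_mono) auto
  then have "4 dvd x i * y j * gram i j" by simp
  then show "4 dvd x i * gram i j * y j" by (simp add: mult_ac)
qed

lemma LK3_subset_L2: "LK3 \<subseteq> L2"
  by (auto simp: LK3_def L2_def)

lemma LK3_iff_L2: "x \<in> LK3 \<longleftrightarrow> x \<in> L2 \<and> x 22 = 0"
proof -
  have "(22::nat) \<le> i \<longleftrightarrow> i = 22 \<or> 23 \<le> i" for i by arith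
  then show ?thesis unfolding LK3_def L2_def by auto
qed

lemma orth_in_Mtilde:
  assumes "(\<lambda>i. 0) \<in> M"
  shows "orth_in (Mtilde M) L2 = orth_in M LK3"
proof -
  have evec_in: "evec \<in> Mtilde M"
    using assms unfolding Mtilde_def by (auto intro!: exI[of _ "\<lambda>i. 0"] exI[of _ 1])
  have M_in: "m \<in> Mtilde M" if "m \<in> M" for m
    using that unfolding Mtilde_def by (auto intro!: exI[of _ m] exI[of _ 0])
  have bil_Mtilde: "bil x y = bil x m + k * bil x evec" if "y = (\<lambda>i. m i + k * evec i)" for x y m k
    using that by (simp add: bil_add_right bil_mult_right)
  show ?thesis
  proof (intro set_eqI iffI)
    fix x assume x: "x \<in> orth_in (Mtilde M) L2"
    then have "x 22 = 0" using evec_in by (auto simp: orth_in_def bil_evec_right)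
    with x show "x \<in> orth_in M LK3" using M_in by (auto simp: orth_in_def LK3_iff_L2)
  next
    fix x assume x: "x \<in> orth_in M LK3"
    then have "x \<in> L2" "bil x evec = 0" by (auto simp: orth_in_def LK3_iff_L2 bil_evec_right)
    with x show "x \<in> orth_in (Mtilde M) L2"
      by (auto simp: orth_in_def Mtilde_def bil_Mtilde)
  qed
qed

lemma Delta_L2_eq_Delta_K3:
  assumes "S \<subseteq> LK3"
  shows "Delta_L2 S = Delta_K3 S"
proof -
  have "4 dvd bil d d" if d: "d \<in> S" and pairing: "(\<lambda>x. bil d x) ` L2 = {2 * k | k. True}" for d
  proof -
    have even_pairing: "even (bil d y)" if "y \<in> LK3" for y
    proof -
      have "bil d y \<in> {2 * k | k. True}" using pairing that LK3_subset_L2 by blast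
      then show ?thesis by auto
    qed
    have "d \<in> LK3" using d assms by blast
    then have "even (d i)" for i using even_pairing by (rule LK3_pairing_even_imp_even)
    then show ?thesis by (simp add: four_dvd_bil_if_even)
  qed
  then show ?thesis by (fastforce simp: Delta_L2_def Delta_K3_def)
qed

theorem lemma4p2:
  fixes M0 :: "(nat \<Rightarrow> int) set"
  assumes "sublattice M0 LK3"
    and "primitive_in M0 LK3"
    and "hyperbolic M0"
    and "two_elementary M0"
  shows "Delta_K3 (orth_in M0 LK3) = Delta_L2 (orth_in (Mtilde M0) L2)"
proof -
  have "(\<lambda>i. 0) \<in> M0" using assms(1) by (simp add: sublattice_def)
  then have "orth_in (Mtilde M0) L2 = orth_in M0 LK3" by (rule orth_in_Mtilde)
  moreover have "orth_in M0 LK3 \<subseteq> LK3" by (auto simp: orth_in_def)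
  ultimately show ?thesis by (simp add: Delta_L2_eq_Delta_K3)
qed

end
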